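(* For every two-way linear $\mathrm{HTA}_\pm$ $\mathcal{A}=\langle Q,\Sigma,\delta,q_I,F\rangle$ over $\Sigma=2^{AP}$ there is a $\mathrm{PastCTL}_\pm$ formula $\varphi_{\mathcal{A}}$ such that $\mathcal{L}(\mathcal{A})=\mathcal{L}(\varphi_{\mathcal{A}})$.
   Context: Fix a finite set $AP$, $\Sigma=2^{AP}$. A $\Sigma$-tree is an unranked (finitely many children per node), unordered, leafless (every node has a child) tree with labelling $t(v)\in\Sigma$. $\mathrm{PastCTL}_\pm$ formulae: $\varphi ::= p\mid\neg\varphi\mid\varphi\lor\varphi\mid\mathsf{D}^n\varphi\mid\mathsf{E}\mathsf{X}\varphi\mid\mathsf{E}(\varphi\,\mathsf{U}\,\varphi)\mid\mathsf{E}\mathsf{Y}\varphi\mid\mathsf{E}(\varphi\,\mathsf{S}\,\varphi)$, evaluated at a node $u$ of $t$: $p$ iff $p\in t(u)$; Booleans as usual; $\mathsf{D}^n\varphi$ iff $u$ has at least $n$ distinct children satisfying $\varphi$; $\mathsf{E}\mathsf{X}\varphi$ iff some child of $u$ satisfies $\varphi$; $\mathsf{E}(\varphi_1\mathsf{U}\varphi_2)$ iff there is a path $u=v_0,v_1,\dots,v_j$ ($j\ge0$, each $v_{k+1}$ a child of $v_k$) with $v_j\models\varphi_2$ and $v_k\models\varphi_1$ for $k<j$; $\mathsf{E}\mathsf{Y}\varphi$ iff $u$ is not the root and its parent satisfies $\varphi$; $\mathsf{E}(\varphi_1\mathsf{S}\varphi_2)$ iff there is $j\ge0$ such that, writing $w_0=u$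 and $w_{k+1}$ the parent of $w_k$ (all existing), $w_j\models\varphi_2$ and $w_k\models\varphi_1$ for $k<j$. $\mathcal{L}(\varphi)$ is the set of trees whose root satisfies $\varphi$. Positive Boolean formulae $\mathcal{B}^+(X)$: built from $\top,\bot$ and elements of $X$ by $\land,\lor$. A two-way $\mathrm{HTA}_\pm$ is $\mathcal{A}=\langle Q,\Sigma,\delta,q_I,F\rangle$ with $Q$ finite, $q_I\in Q$, $F\subseteq Q$ and $\delta:Q\times\Sigma\times\{\mathit{root},\mathit{nonroot}\}\to\mathcal{B}^+(\{\Diamond_k,\Box_k\}_{k\in\mathbb{N}}\times Q\ \cup\ \{\Uparrow\}\times Q)$; write $\Diamond=\Diamond_1$, $\Box=\Box_1$. A run on $t$ from node $s$ is a tree $r$ labelled by $Q\times\mathrm{Dom}(t)$ whose root is labelled $(q_I,s)$ and each node $x$ labelled $(q,v)$ satisfies $\delta(q,t(v),\rho)$, $\rho=\mathit{root}$ iff $v$ is the root of $t$, where: $x\models(\Diamond_k,q')$ iff $x$ has children labelled $(q',v_1),\dots,(q',v_k)$ with $v_1,\dots,v_k$ pairwise distinct children of $v$; $x\models(\Box_k,q')$ iff for all but at most $k-1$ children $v'$ of $v$, $x$ has a child labelled $(q',v')$; $x\models(\Uparrow,q')$ iff $x$ has a child labelled $(q',v')$ with $v'$ the parent of $v$ in $t$; $\top,\bot,\land,\lor$ as usual. A run is accepting if every infinite path in $r$ from its root has infinitely many nodes with state in $F$. $\mathcal{L}(\mathcal{A})$ is the set of trees with an accepting run from the root. Hesitant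 structure: $Q$ is partitioned into nonempty components $Q_1,\dots,Q_n$, totally ordered so that if $q\in Q_i$ and $q'\in Q_j$ occurs in an atom of some $\delta(q,\sigma,\rho)$ then $j\le i$; each component is of exactly one type (a $Q_i$-atom is an atom whose state is in $Q_i$): transient (no $Q_i$-atom in $\delta(q,\sigma,\rho)$ for $q\in Q_i$); existential (all such $Q_i$-atoms have the form $(\Diamond,q')$ and each clause of the disjunctive normal form of $\delta(q,\sigma,\rho)$ has at most one $Q_i$-atom); universal (all such $Q_i$-atoms have the form $(\Box,q')$ and each clause of the conjunctive normal form has at most one $Q_i$-atom); upward (for a singleton $\{q\}$: $q$ occurs in $\delta(q,\sigma,\rho)$ only in atoms $(\Uparrow,q)$). Polarised: states of existential components are not in $F$ and states of universal components are in $F$. Linear: every component is a singleton. *)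

theory Defs
  imports Main
begin

text \<open>Nodes are represented as lists of naturals (the root is the empty list, the
  children of v are the nodes v @ [i]); the order of children is irrelevant to all
  notions below, so this represents unordered trees.\<close>

record 'ap stree =
  tdom :: "nat list set"
  tlab :: "nat list \<Rightarrow> 'ap set"

definition tchildren :: "'ap stree \<Rightarrow> nat list \<Rightarrow> nat list set" where
  "tchildren T v = {w \<in> tdom T. \<exists>i. w = v @ [i]}"

definition wf_tree :: "'ap stree \<Rightarrow> bool" where
  "wf_tree T \<longleftrightarrow> [] \<in> tdom T
     \<and> (\<forall>v i. v @ [i] \<in> tdom T \<longrightarrow> v \<in> tdom T)
     \<and> (\<forall>v \<in> tdom T. finite (tchildren T v) \<and> tchildren T v \<noteq> {})"

datatype 'ap pctl =
    Prop 'ap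
  | Neg "'ap pctl"
  | Or "'ap pctl" "'ap pctl"
  | Dn nat "'ap pctl"
  | EXn "'ap pctl"
  | EU "'ap pctl" "'ap pctl"
  | EY "'ap pctl"
  | ES "'ap pctl" "'ap pctl"

text \<open>Parent of a (non-root) node u is butlast u; the k-th ancestor of u is
  take (length u - k) u.\<close>

fun sat :: "'ap stree \<Rightarrow> nat list \<Rightarrow> 'ap pctl \<Rightarrow> bool" where
  "sat T u (Prop p) = (p \<in> tlab T u)"
| "sat T u (Neg \<phi>) = (\<not> sat T u \<phi>)"
| "sat T u (Or \<phi> \<psi>) = (sat T u \<phi> \<or> sat T u \<psi>)"
| "sat T u (Dn n \<phi>) = (n \<le> card {c \<in> tchildren T u. sat T c \<phi>})"
| "sat T u (EXn \<phi>) = (\<exists>c \<in> tchildren T u. sat T c \<phi>)"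
| "sat T u (EU \<phi> \<psi>) = (\<exists>(f :: nat \<Rightarrow> nat list) j. f 0 = u
      \<and> (\<forall>k<j. f (Suc k) \<in> tchildren T (f k))
      \<and> sat T (f j) \<psi> \<and> (\<forall>k<j. sat T (f k) \<phi>))"
| "sat T u (EY \<phi>) = (u \<noteq> [] \<and> sat T (butlast u) \<phi>)"
| "sat T u (ES \<phi> \<psi>) = (\<exists>j \<le> length u. sat T (take (length u - j) u) \<psi>
      \<and> (\<forall>k<j. sat T (take (length u - k) u) \<phi>))"

definition ctl_lang :: "'ap pctl \<Rightarrow> 'ap stree set" where
  "ctl_lang \<phi> = {T. wf_tree T \<and> sat T [] \<phi>}"

datatype 'a pbf = PTrue | PFalse | PAtom 'a | PAnd "'a pbf" "'a pbf" | POr "'a pbf" "'a pbf"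

fun pbf_sat :: "('a \<Rightarrow> bool) \<Rightarrow> 'a pbf \<Rightarrow> bool" where
  "pbf_sat I PTrue = True"
| "pbf_sat I PFalse = False"
| "pbf_sat I (PAtom a) = I a"
| "pbf_sat I (PAnd f g) = (pbf_sat I f \<and> pbf_sat I g)"
| "pbf_sat I (POr f g) = (pbf_sat I f \<or> pbf_sat I g)"

fun pbf_atoms :: "'a pbf \<Rightarrow> 'a set" where
  "pbf_atoms PTrue = {}"
| "pbf_atoms PFalse = {}"
| "pbf_atoms (PAtom a) = {a}"
| "pbf_atoms (PAnd f g) = pbf_atoms f \<union> pbf_atoms g"
| "pbf_atoms (POr f g) = pbf_atoms f \<union> pbf_atoms g"

text \<open>Disjunctive / conjunctive normal form, as sets of clauses (sets of atoms).\<close>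

fun dnf :: "'a pbf \<Rightarrow> 'a set set" where
  "dnf PTrue = {{}}"
| "dnf PFalse = {}"
| "dnf (PAtom a) = {{a}}"
| "dnf (POr f g) = dnf f \<union> dnf g"
| "dnf (PAnd f g) = {c \<union> d | c d. c \<in> dnf f \<and> d \<in> dnf g}"

fun cnf :: "'a pbf \<Rightarrow> 'a set set" where
  "cnf PTrue = {}"
| "cnf PFalse = {{}}"
| "cnf (PAtom a) = {{a}}"
| "cnf (PAnd f g) = cnf f \<union> cnf g"
| "cnf (POr f g) = {c \<union> d | c d. c \<in> cnf f \<and> d \<in> cnf g}"

datatype 'q atom = Dia nat 'q | Box nat 'q | Up 'q

fun atom_state :: "'q atom \<Rightarrow> 'q" where
  "atom_state (Dia k q) = q"
| "atom_state (Box k q) = q"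
| "atom_state (Up q) = q"

text \<open>The state set Q is the finite type 'q; the boolean argument of delta is
  True iff the current node is the root.\<close>

record ('ap, 'q) hta =
  delta :: "'q \<Rightarrow> 'ap set \<Rightarrow> bool \<Rightarrow> 'q atom pbf"
  init :: 'q
  acc :: "'q set"

definition rchildren :: "nat list set \<Rightarrow> nat list \<Rightarrow> nat list set" where
  "rchildren R x = {y \<in> R. \<exists>i. y = x @ [i]}"

fun atom_sat :: "'ap stree \<Rightarrow> nat list set \<Rightarrow> (nat list \<Rightarrow> 'q \<times> nat list)
                  \<Rightarrow> nat list \<Rightarrow> 'q atom \<Rightarrow> bool" where
  "atom_sat T R rl x (Dia k q') =
     (\<exists>V \<subseteq> tchildren T (snd (rl x)). card V = k
        \<and> (\<forall>v \<in> V. \<exists>y \<in> rchildren R x. rl y = (q', v)))"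
| "atom_sat T R rl x (Box k q') =
     (card {v \<in> tchildren T (snd (rl x)). \<not> (\<exists>y \<in> rchildren R x. rl y = (q', v))} < k)"
| "atom_sat T R rl x (Up q') =
     (snd (rl x) \<noteq> [] \<and> (\<exists>y \<in> rchildren R x. rl y = (q', butlast (snd (rl x)))))"

definition is_run :: "('ap, 'q) hta \<Rightarrow> 'ap stree \<Rightarrow> nat list
                       \<Rightarrow> nat list set \<Rightarrow> (nat list \<Rightarrow> 'q \<times> nat list) \<Rightarrow> bool" where
  "is_run A T s R rl \<longleftrightarrow> [] \<in> R
     \<and> (\<forall>x i. x @ [i] \<in> R \<longrightarrow> x \<in> R)
     \<and> rl [] = (init A, s)
     \<and> (\<forall>x \<in> R. snd (rl x) \<in> tdom T
          \<and> pbf_sat (atom_sat T R rl x)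
              (delta A (fst (rl x)) (tlab T (snd (rl x))) (snd (rl x) = [])))"

definition accepting_run :: "('ap, 'q) hta \<Rightarrow> 'ap stree \<Rightarrow> nat list
                       \<Rightarrow> nat list set \<Rightarrow> (nat list \<Rightarrow> 'q \<times> nat list) \<Rightarrow> bool" where
  "accepting_run A T s R rl \<longleftrightarrow> is_run A T s R rl
     \<and> (\<forall>p :: nat \<Rightarrow> nat list. p 0 = [] \<and> (\<forall>n. p (Suc n) \<in> rchildren R (p n))
          \<longrightarrow> (\<forall>m. \<exists>n \<ge> m. fst (rl (p n)) \<in> acc A))"

definition hta_lang :: "('ap, 'q) hta \<Rightarrow> 'ap stree set" where
  "hta_lang A = {T. wf_tree T \<and> (\<exists>R rl. accepting_run A T [] R rl)}"

datatype comp_type = Transient | Existential | Universal | Upward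

fun type_ok :: "('ap, 'q) hta \<Rightarrow> 'q \<Rightarrow> comp_type \<Rightarrow> bool" where
  "type_ok A q Transient =
     (\<forall>\<sigma> \<rho>. q \<notin> atom_state ` pbf_atoms (delta A q \<sigma> \<rho>))"
| "type_ok A q Existential =
     (\<forall>\<sigma> \<rho>. (\<forall>a \<in> pbf_atoms (delta A q \<sigma> \<rho>). atom_state a = q \<longrightarrow> a = Dia 1 q)
        \<and> (\<forall>c \<in> dnf (delta A q \<sigma> \<rho>). card {a \<in> c. atom_state a = q} \<le> 1))"
| "type_ok A q Universal =
     (\<forall>\<sigma> \<rho>. (\<forall>a \<in> pbf_atoms (delta A q \<sigma> \<rho>). atom_state a = q \<longrightarrow> a = Box 1 q)
        \<and> (\<forall>c \<in> cnf (delta A q \<sigma> \<rho>). card {a \<in> c. atom_state a = q} \<le> 1))"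
| "type_ok A q Upward =
     (\<forall>\<sigma> \<rho>. \<forall>a \<in> pbf_atoms (delta A q \<sigma> \<rho>). atom_state a = q \<longrightarrow> a = Up q)"

text \<open>Linear hesitant polarised automaton: all components are singletons {q},
  totally ordered by an injective rank, each assigned a type, polarised.\<close>

definition linear_hta :: "('ap, 'q) hta \<Rightarrow> bool" where
  "linear_hta A \<longleftrightarrow> (\<exists>(rk :: 'q \<Rightarrow> nat) (typ :: 'q \<Rightarrow> comp_type).
       inj rk
     \<and> (\<forall>q \<sigma> \<rho>. \<forall>a \<in> pbf_atoms (delta A q \<sigma> \<rho>). rk (atom_state a) \<le> rk q)
     \<and> (\<forall>q. type_ok A q (typ q))
     \<and> (\<forall>q. typ q = Existential \<longrightarrow> q \<notin> acc A)
     \<and> (\<forall>q. typ q = Universal \<longrightarrow> q \<in> acc A))"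

end

theory Submission
  imports Defs "HOL-Library.Countable"
begin

text \<open>
  Induct on the rank of the singleton components. For a state \<open>q\<close>, unfolding one transition
  shows that \<open>q\<close> accepts at \<open>u\<close> iff \<open>G\<^sub>0(u) \<or> (s(u) \<and> G\<^sub>1(u))\<close>, where \<open>s\<close> is the
  only atom of the transitions of \<open>q\<close> that leads back to \<open>q\<close>, and \<open>G\<^sub>b\<close> is the transition of
  \<open>q\<close> with \<open>s\<close> replaced by \<open>b\<close> and every other atom by the formula characterising its strictly
  lower state. So the accepting nodes of \<open>q\<close> form a fixpoint: for a transient state it is
  \<open>G\<^sub>0\<close>; along the ancestors (upward) the fixpoint is unique and equals \<open>E(G\<^sub>1 S G\<^sub>0)\<close>; for an
  existential state, which is rejecting, it is the least fixpoint \<open>E(G\<^sub>1 U G\<^sub>0)\<close>; for a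
  universal state, which is accepting, it is the greatest fixpoint \<open>\<not>E(\<not>G\<^sub>0 U \<not>G\<^sub>1)\<close>.
  Leastness and greatness come from a refutation principle for rejecting states and a
  coinduction principle, both obtained by presenting runs as graphs and unravelling them.
\<close>

fun atom_holds :: "'ap stree \<Rightarrow> ('q \<times> nat list) set \<Rightarrow> nat list \<Rightarrow> 'q atom \<Rightarrow> bool" where
  "atom_holds T S w (Dia k q) = (\<exists>V \<subseteq> tchildren T w. card V = k \<and> (\<forall>u \<in> V. (q, u) \<in> S))"
| "atom_holds T S w (Box k q) = (card {u \<in> tchildren T w. (q, u) \<notin> S} < k)"
| "atom_holds T S w (Up q) = (w \<noteq> [] \<and> (q, butlast w) \<in> S)"

lemma atom_sat_eq_atom_holds: "atom_sat T R rl x = atom_holds T (rl ` rchildren R x) (snd (rl x))"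
proof
  fix a show "atom_sat T R rl x a = atom_holds T (rl ` rchildren R x) (snd (rl x)) a"
    by (cases a) (auto simp: image_iff eq_commute)
qed

lemma finite_tchildren: "wf_tree T \<Longrightarrow> w \<in> tdom T \<Longrightarrow> finite (tchildren T w)"
  by (simp add: wf_tree_def)

lemma tchildren_in_tdom: "c \<in> tchildren T w \<Longrightarrow> c \<in> tdom T"
  by (simp add: tchildren_def)

lemma butlast_in_tdom: "wf_tree T \<Longrightarrow> w \<in> tdom T \<Longrightarrow> w \<noteq> [] \<Longrightarrow> butlast w \<in> tdom T"
  unfolding wf_tree_def by (metis append_butlast_last_id)

lemma atom_holds_mono:
  assumes "wf_tree T" "w \<in> tdom T" "S \<subseteq> S'" "atom_holds T S w a"
  shows "atom_holds T S' w a"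
proof (cases a)
  case (Box k q)
  have "card {u \<in> tchildren T w. (q, u) \<notin> S'} \<le> card {u \<in> tchildren T w. (q, u) \<notin> S}"
    using assms(3) by (intro card_mono) (auto simp: finite_tchildren[OF assms(1,2)])
  with assms(4) Box show ?thesis by simp
qed (use assms in auto)

lemma atom_holds_cong:
  assumes "wf_tree T" "w \<in> tdom T"
    and "\<And>u. u \<in> tdom T \<Longrightarrow> (atom_state a, u) \<in> S \<longleftrightarrow> (atom_state a, u) \<in> S'"
  shows "atom_holds T S w a = atom_holds T S' w a"
proof (cases a)
  case (Dia k q)
  then have "\<forall>u \<in> tchildren T w. (q, u) \<in> S \<longleftrightarrow> (q, u) \<in> S'"
    using assms(3) tchildren_in_tdom by auto
  then show ?thesis using Dia by simp blast
next
  case (Box k q)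
  then have "{u \<in> tchildren T w. (q, u) \<notin> S} = {u \<in> tchildren T w. (q, u) \<notin> S'}"
    using assms(3) tchildren_in_tdom by auto
  then show ?thesis using Box by simp
next
  case (Up q)
  then show ?thesis using assms butlast_in_tdom by auto
qed

lemma atom_holds_Dia_1: "atom_holds T S w (Dia 1 q) \<longleftrightarrow> (\<exists>c \<in> tchildren T w. (q, c) \<in> S)"
  by (auto simp: card_1_singleton_iff)

lemma atom_holds_Box_1:
  "wf_tree T \<Longrightarrow> w \<in> tdom T \<Longrightarrow> atom_holds T S w (Box 1 q) \<longleftrightarrow> (\<forall>c \<in> tchildren T w. (q, c) \<in> S)"
  by (auto simp: finite_tchildren)

lemma pbf_sat_mono: "(\<And>a. a \<in> pbf_atoms \<phi> \<Longrightarrow> I a \<Longrightarrow> J a) \<Longrightarrow> pbf_sat I \<phi> \<Longrightarrow> pbf_sat J \<phi>"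
  by (induction \<phi>) auto

lemma pbf_sat_cong: "(\<And>a. a \<in> pbf_atoms \<phi> \<Longrightarrow> I a = J a) \<Longrightarrow> pbf_sat I \<phi> = pbf_sat J \<phi>"
  by (induction \<phi>) auto

definition step_holds :: "('ap, 'q) hta \<Rightarrow> 'ap stree \<Rightarrow> ('q \<times> nat list) set \<Rightarrow> 'q \<Rightarrow> nat list \<Rightarrow> bool" where
  "step_holds A T S q w \<longleftrightarrow> pbf_sat (atom_holds T S w) (delta A q (tlab T w) (w = []))"

lemma step_holds_mono:
  "wf_tree T \<Longrightarrow> w \<in> tdom T \<Longrightarrow> S \<subseteq> S' \<Longrightarrow> step_holds A T S q w \<Longrightarrow> step_holds A T S' q w"
  unfolding step_holds_def by (blast intro: pbf_sat_mono atom_holds_mono)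

section \<open>Runs presented as graphs\<close>

definition graph_run ::
    "('ap, 'q) hta \<Rightarrow> 'ap stree \<Rightarrow> 'v set \<Rightarrow> ('v \<Rightarrow> 'v set) \<Rightarrow> ('v \<Rightarrow> 'q \<times> nat list) \<Rightarrow> bool" where
  "graph_run A T W succ lab \<longleftrightarrow> (\<forall>v \<in> W. succ v \<subseteq> W \<and> snd (lab v) \<in> tdom T
     \<and> step_holds A T (lab ` succ v) (fst (lab v)) (snd (lab v)))"

definition fair_from :: "('ap, 'q) hta \<Rightarrow> ('v \<Rightarrow> 'v set) \<Rightarrow> ('v \<Rightarrow> 'q \<times> nat list) \<Rightarrow> 'v \<Rightarrow> bool" where
  "fair_from A succ lab v \<longleftrightarrow> (\<forall>c. c 0 = v \<longrightarrow> (\<forall>n. c (Suc n) \<in> succ (c n))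
     \<longrightarrow> (\<forall>m. \<exists>n \<ge> m. fst (lab (c n)) \<in> acc A))"

lemma graph_runD:
  assumes "graph_run A T W succ lab" "v \<in> W"
  shows "succ v \<subseteq> W" "snd (lab v) \<in> tdom T" "step_holds A T (lab ` succ v) (fst (lab v)) (snd (lab v))"
  using assms unfolding graph_run_def by blast+

lemma fair_fromD:
  assumes "fair_from A succ lab v" "c 0 = v" "\<And>n. c (Suc n) \<in> succ (c n)"
  shows "\<exists>n \<ge> m. fst (lab (c n)) \<in> acc A"
  using assms unfolding fair_from_def by blast

lemma graph_run_init_update [simp]: "graph_run (A\<lparr>init := q\<rparr>) = graph_run A"
  by (simp add: graph_run_def step_holds_def fun_eq_iff)

lemma fair_from_init_update [simp]: "fair_from (A\<lparr>init := q\<rparr>) = fair_from A"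
  by (simp add: fair_from_def fun_eq_iff)

lemma accepting_run_iff_graph_run:
  "accepting_run A T s R rl \<longleftrightarrow> [] \<in> R \<and> (\<forall>x i. x @ [i] \<in> R \<longrightarrow> x \<in> R) \<and> rl [] = (init A, s)
     \<and> graph_run A T R (rchildren R) rl \<and> fair_from A (rchildren R) rl []"
  by (auto simp: accepting_run_def is_run_def graph_run_def fair_from_def step_holds_def
      atom_sat_eq_atom_holds rchildren_def)

definition accepts_at :: "('ap, 'q) hta \<Rightarrow> 'ap stree \<Rightarrow> 'q \<Rightarrow> nat list \<Rightarrow> bool" where
  "accepts_at A T q v \<longleftrightarrow> (\<exists>R rl. accepting_run (A\<lparr>init := q\<rparr>) T v R rl)"

definition accepted_pairs :: "('ap, 'q) hta \<Rightarrow> 'ap stree \<Rightarrow> ('q \<times> nat list) set" where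
  "accepted_pairs A T = {(q, v). accepts_at A T q v}"

lemma mem_accepted_pairs [simp]: "(q, v) \<in> accepted_pairs A T \<longleftrightarrow> accepts_at A T q v"
  by (simp add: accepted_pairs_def)

lemma accepts_at_in_tdom: "accepts_at A T q v \<Longrightarrow> v \<in> tdom T"
  unfolding accepts_at_def accepting_run_iff_graph_run graph_run_def by force

fun succ_path :: "('v \<Rightarrow> 'v set) \<Rightarrow> 'v \<Rightarrow> 'v list \<Rightarrow> bool" where
  "succ_path succ v [] = True"
| "succ_path succ v (w # ws) = (w \<in> succ v \<and> succ_path succ w ws)"

lemma succ_path_snoc:
  "succ_path succ v (vs @ [w]) \<longleftrightarrow> succ_path succ v vs \<and> w \<in> succ (last (v # vs))"
  by (induction vs arbitrary: v) auto

lemma succ_path_last_in: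
  assumes "succ_path succ v vs" "v \<in> W" "\<And>v. v \<in> W \<Longrightarrow> succ v \<subseteq> W"
  shows "last (v # vs) \<in> W"
  using assms by (induction vs arbitrary: v) (auto, blast)

text \<open>A graph run on a countable vertex type is unravelled into a run tree whose nodes are the
  paths from the initial vertex, coded as lists of natural numbers.\<close>

definition unravel_nodes :: "('v::countable \<Rightarrow> 'v set) \<Rightarrow> 'v \<Rightarrow> nat list set" where
  "unravel_nodes succ v = map to_nat ` Collect (succ_path succ v)"

definition unravel_label :: "('v::countable \<Rightarrow> 'a) \<Rightarrow> 'v \<Rightarrow> nat list \<Rightarrow> 'a" where
  "unravel_label lab v x = lab (last (v # map from_nat x))"

lemma unravel_label_map_to_nat: "unravel_label lab v (map to_nat vs) = lab (last (v # vs))"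
  by (simp add: unravel_label_def comp_def)

lemma map_to_nat_eq_snoc:
  "map to_nat ws = map to_nat vs @ [i] \<longleftrightarrow> (\<exists>w. ws = vs @ [w] \<and> i = to_nat w)"
  by (auto simp: map_eq_append_conv inj_eq[OF inj_to_nat] list.inj_map_strong)

lemma rchildren_unravel_nodes:
  assumes "succ_path succ v vs"
  shows "rchildren (unravel_nodes succ v) (map to_nat vs)
    = (\<lambda>w. map to_nat (vs @ [w])) ` succ (last (v # vs))"
  using assms
  by (auto simp: rchildren_def unravel_nodes_def map_to_nat_eq_snoc succ_path_snoc
      intro!: rev_image_eqI[of "vs @ [w]" for w])

lemma rchildren_unravel_nodesE:
  assumes "succ_path succ v vs" "y \<in> rchildren (unravel_nodes succ v) (map to_nat vs)"
  obtains w where "w \<in> succ (last (v # vs))" "y = map to_nat (vs @ [w])"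
  using assms(2) unfolding rchildren_unravel_nodes[OF assms(1)] by blast

lemma unravel_nodes_prefix_closed:
  assumes "x @ [i] \<in> unravel_nodes succ v"
  shows "x \<in> unravel_nodes succ v"
proof -
  obtain ws where ws: "x @ [i] = map to_nat ws" "succ_path succ v ws"
    using assms by (auto simp: unravel_nodes_def)
  then have "ws \<noteq> []" by auto
  then have "ws = butlast ws @ [last ws]" by simp
  then have "succ_path succ v (butlast ws)" using ws(2) succ_path_snoc by metis
  moreover have "x = map to_nat (butlast ws)" using arg_cong[OF ws(1), of butlast] by (simp add: map_butlast)
  ultimately show ?thesis by (auto simp: unravel_nodes_def)
qed

lemma graph_run_unravel:
  assumes run: "graph_run A T W succ lab" and "v \<in> W"
  shows "graph_run A T (unravel_nodes succ v) (rchildren (unravel_nodes succ v)) (unravel_label lab v)"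
  unfolding graph_run_def
proof (intro ballI conjI)
  fix x assume "x \<in> unravel_nodes succ v"
  then obtain vs where x: "x = map to_nat vs" and vs: "succ_path succ v vs"
    by (auto simp: unravel_nodes_def)
  have "last (v # vs) \<in> W"
    using succ_path_last_in[OF vs \<open>v \<in> W\<close>] graph_runD(1)[OF run] by blast
  note graph_runD(2,3)[OF run this]
  moreover have "unravel_label lab v ` rchildren (unravel_nodes succ v) x = lab ` succ (last (v # vs))"
    unfolding x rchildren_unravel_nodes[OF vs] image_image unravel_label_map_to_nat by simp
  ultimately show "snd (unravel_label lab v x) \<in> tdom T"
    and "step_holds A T (unravel_label lab v ` rchildren (unravel_nodes succ v) x)
           (fst (unravel_label lab v x)) (snd (unravel_label lab v x))"
    by (simp_all add: x unravel_label_map_to_nat)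
qed (auto simp: rchildren_def)

lemma fair_from_unravel:
  assumes fair: "fair_from A succ lab v"
  shows "fair_from A (rchildren (unravel_nodes succ v)) (unravel_label lab v) []"
  unfolding fair_from_def
proof (intro allI impI)
  fix p m assume p0: "p 0 = []" and p: "\<forall>n. p (Suc n) \<in> rchildren (unravel_nodes succ v) (p n)"
  have next_node: "\<exists>w \<in> succ (last (v # vs)). p (Suc n) = map to_nat (vs @ [w])"
    if "succ_path succ v vs" "p n = map to_nat vs" for n vs
    using rchildren_unravel_nodesE[OF that(1)] p that(2) by metis
  have path: "\<exists>vs. succ_path succ v vs \<and> p n = map to_nat vs" for n
  proof (induction n)
    case (Suc n)
    then obtain vs where "succ_path succ v vs" "p n = map to_nat vs" by blast
    with next_node show ?case by (metis succ_path_snoc)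
  qed (simp add: p0)
  define c where "c n = last (v # map from_nat (p n))" for n
  have c: "c (Suc n) \<in> succ (c n)" for n
  proof -
    obtain vs where vs: "succ_path succ v vs" "p n = map to_nat vs" using path by blast
    then obtain w where "w \<in> succ (last (v # vs))" "p (Suc n) = map to_nat (vs @ [w])"
      using next_node by blast
    then show ?thesis using vs(2) by (simp add: c_def comp_def)
  qed
  have "c 0 = v" by (simp add: c_def p0)
  then have "\<exists>n \<ge> m. fst (lab (c n)) \<in> acc A" by (rule fair_fromD[where c = c, OF fair _ c])
  then show "\<exists>n \<ge> m. fst (unravel_label lab v (p n)) \<in> acc A"
    by (simp add: c_def unravel_label_def)
qed

lemma graph_run_accepted:
  fixes lab :: "'v::countable \<Rightarrow> 'q \<times> nat list"
  assumes "graph_run A T W succ lab" "v \<in> W" "fair_from A succ lab v"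
  shows "lab v \<in> accepted_pairs A T"
proof -
  have "[] \<in> unravel_nodes succ v"
    by (auto simp: unravel_nodes_def intro: rev_image_eqI[of "[]"])
  then have "accepting_run (A\<lparr>init := fst (lab v)\<rparr>) T (snd (lab v))
      (unravel_nodes succ v) (unravel_label lab v)"
    unfolding accepting_run_iff_graph_run
    using graph_run_unravel[OF assms(1,2)] fair_from_unravel[OF assms(3)] unravel_nodes_prefix_closed
    by (simp add: unravel_label_def) blast
  then have "accepts_at A T (fst (lab v)) (snd (lab v))" unfolding accepts_at_def by blast
  then show ?thesis by (simp add: accepted_pairs_def case_prod_beta)
qed

lemma take_in_prefix_closed:
  assumes "\<forall>x i. x @ [i] \<in> R \<longrightarrow> x \<in> R" "x \<in> R"
  shows "take n x \<in> R"
  using assms(2)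
proof (induction x rule: rev_induct)
  case (snoc a xs)
  then have "take n xs \<in> R" using assms(1) by blast
  then show ?case using snoc.prems by (cases "n \<le> length xs") simp_all
qed simp

lemma fair_from_run_node:
  assumes run: "accepting_run A T s R rl" and x: "x \<in> R"
  shows "fair_from A (rchildren R) rl x"
  unfolding fair_from_def
proof (intro allI impI)
  fix c m assume c0: "c 0 = x" and c: "\<forall>n. c (Suc n) \<in> rchildren R (c n)"
  have pc: "\<forall>x i. x @ [i] \<in> R \<longrightarrow> x \<in> R" using run by (simp add: accepting_run_iff_graph_run)
  define p where "p n = (if n < length x then take n x else c (n - length x))" for n
  have p: "p (Suc n) \<in> rchildren R (p n)" for n
  proof (cases "Suc n \<le> length x")
    case True
    then have "take (Suc n) x = take n x @ [x ! n]" by (simp add: take_Suc_conv_app_nth)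
    moreover have "take (Suc n) x \<in> R" using take_in_prefix_closed[OF pc x] .
    ultimately show ?thesis using True c0 by (auto simp: p_def rchildren_def)
  next
    case False
    then have "Suc n - length x = Suc (n - length x)" by simp
    then show ?thesis using False c by (simp add: p_def)
  qed
  have "p 0 = []" using c0 by (simp add: p_def)
  moreover have "fair_from A (rchildren R) rl []" using run by (simp add: accepting_run_iff_graph_run)
  ultimately obtain n where "n \<ge> m + length x" "fst (rl (p n)) \<in> acc A"
    using fair_fromD[where c = p] p by blast
  then show "\<exists>n \<ge> m. fst (rl (c n)) \<in> acc A"
    by (intro exI[of _ "n - length x"]) (simp add: p_def)
qed

lemma run_labels_accepted:
  assumes run: "accepting_run (A\<lparr>init := q\<rparr>) T s R rl" and x: "x \<in> R"
  shows "rl x \<in> accepted_pairs A T"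
proof -
  have "graph_run A T R (rchildren R) rl"
    using run by (simp add: accepting_run_iff_graph_run)
  moreover have "fair_from A (rchildren R) rl x"
    using fair_from_run_node[OF run x] by simp
  ultimately show ?thesis using graph_run_accepted x by blast
qed

lemma accepts_at_imp_step_holds:
  assumes wf: "wf_tree T" and "accepts_at A T q v"
  shows "step_holds A T (accepted_pairs A T) q v"
proof -
  obtain R rl where run: "accepting_run (A\<lparr>init := q\<rparr>) T v R rl"
    using assms(2) unfolding accepts_at_def by blast
  then have root: "[] \<in> R" "rl [] = (q, v)" and gr: "graph_run A T R (rchildren R) rl"
    by (simp_all add: accepting_run_iff_graph_run)
  have dom: "v \<in> tdom T" and step: "step_holds A T (rl ` rchildren R []) q v"
    using graph_runD(2,3)[OF gr root(1)] by (simp_all add: root(2))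
  have "rl ` rchildren R [] \<subseteq> accepted_pairs A T"
    using run_labels_accepted[OF run] unfolding rchildren_def by blast
  then show ?thesis using step_holds_mono[OF wf dom _ step] by blast
qed

section \<open>Coinduction and refutation\<close>

definition adjacent :: "'ap stree \<Rightarrow> nat list \<Rightarrow> nat list \<Rightarrow> bool" where
  "adjacent T w u \<longleftrightarrow> u \<in> tchildren T w \<or> (w \<noteq> [] \<and> u = butlast w)"

lemma not_adjacent_self: "\<not> adjacent T w w"
proof
  assume "adjacent T w w"
  then consider i where "w = w @ [i]" | "w \<noteq> []" "butlast w = w"
    unfolding adjacent_def tchildren_def by auto
  then show False
  proof cases
    case 2
    have "length (butlast w) < length w" using 2(1) by simp
    then show False using 2(2) by (metis less_irrefl)
  qed simp
qed

lemma atom_holds_adjacent: "atom_holds T {p \<in> S. adjacent T w (snd p)} w = atom_holds T S w"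
proof
  fix a show "atom_holds T {p \<in> S. adjacent T w (snd p)} w a = atom_holds T S w a"
  proof (cases a)
    case (Box k q)
    then have "{u \<in> tchildren T w. (q, u) \<notin> {p \<in> S. adjacent T w (snd p)}}
        = {u \<in> tchildren T w. (q, u) \<notin> S}"
      by (auto simp: adjacent_def)
    then show ?thesis using Box by simp
  qed (auto simp: adjacent_def)
qed

lemma step_holds_adjacent:
  "step_holds A T {p \<in> S. adjacent T w (snd p)} q w = step_holds A T S q w"
  unfolding step_holds_def atom_holds_adjacent ..

definition some_run ::
    "('ap, 'q) hta \<Rightarrow> 'ap stree \<Rightarrow> 'q \<times> nat list \<Rightarrow> nat list set \<times> (nat list \<Rightarrow> 'q \<times> nat list)" where
  "some_run A T p = (SOME r. accepting_run (A\<lparr>init := fst p\<rparr>) T (snd p) (fst r) (snd r))"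

lemma accepting_run_some_run:
  assumes "p \<in> accepted_pairs A T"
  shows "accepting_run (A\<lparr>init := fst p\<rparr>) T (snd p) (fst (some_run A T p)) (snd (some_run A T p))"
proof -
  obtain R rl where "accepting_run (A\<lparr>init := fst p\<rparr>) T (snd p) R rl"
    using assms unfolding accepted_pairs_def accepts_at_def by auto
  then have "\<exists>r. accepting_run (A\<lparr>init := fst p\<rparr>) T (snd p) (fst r) (snd r)" by auto
  then show ?thesis unfolding some_run_def by (rule someI_ex)
qed

lemma some_run_root:
  assumes "p \<in> accepted_pairs A T"
  shows "[] \<in> fst (some_run A T p)" "snd (some_run A T p) [] = p"
  using accepting_run_some_run[OF assms] by (simp_all add: accepting_run_iff_graph_run)

type_synonym 'q coind_vertex = "('q \<times> nat list) + ('q \<times> nat list) \<times> nat list"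

text \<open>The graph behind the coinduction principle below: a vertex \<open>Inl p\<close> stands for a pair
  \<open>p \<in> P\<close>, whose obligations are met by adjacent pairs of \<open>P\<close> or by the roots of accepting
  runs; a vertex \<open>Inr (p, y)\<close> is the node \<open>y\<close> of a fixed accepting run from the accepted pair \<open>p\<close>.\<close>

definition coind_vertices :: "('ap, 'q) hta \<Rightarrow> 'ap stree \<Rightarrow> ('q \<times> nat list) set \<Rightarrow> 'q coind_vertex set" where
  "coind_vertices A T P = Inl ` P \<union> Inr ` (SIGMA p : accepted_pairs A T. fst (some_run A T p))"

definition coind_succ ::
    "('ap, 'q) hta \<Rightarrow> 'ap stree \<Rightarrow> ('q \<times> nat list) set \<Rightarrow> 'q coind_vertex \<Rightarrow> 'q coind_vertex set" where
  "coind_succ A T P v = (case v of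
       Inl (q, w) \<Rightarrow> Inl ` {p \<in> P. adjacent T w (snd p)}
         \<union> (\<lambda>p. Inr (p, [])) ` {p \<in> accepted_pairs A T. adjacent T w (snd p)}
     | Inr (p, y) \<Rightarrow> (\<lambda>y'. Inr (p, y')) ` rchildren (fst (some_run A T p)) y)"

definition coind_label :: "('ap, 'q) hta \<Rightarrow> 'ap stree \<Rightarrow> 'q coind_vertex \<Rightarrow> 'q \<times> nat list" where
  "coind_label A T v = (case v of Inl p \<Rightarrow> p | Inr (p, y) \<Rightarrow> snd (some_run A T p) y)"

lemma graph_run_coind:
  assumes local: "\<And>q w. (q, w) \<in> P \<Longrightarrow> w \<in> tdom T \<and> step_holds A T (P \<union> accepted_pairs A T) q w"
  shows "graph_run A T (coind_vertices A T P) (coind_succ A T P) (coind_label A T)"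
  unfolding graph_run_def
proof (intro ballI)
  fix v assume "v \<in> coind_vertices A T P"
  then consider (pair) q w where "v = Inl (q, w)" "(q, w) \<in> P"
    | (run) p y where "v = Inr (p, y)" "p \<in> accepted_pairs A T" "y \<in> fst (some_run A T p)"
    by (auto simp: coind_vertices_def)
  then show "coind_succ A T P v \<subseteq> coind_vertices A T P \<and> snd (coind_label A T v) \<in> tdom T
    \<and> step_holds A T (coind_label A T ` coind_succ A T P v) (fst (coind_label A T v)) (snd (coind_label A T v))"
  proof cases
    case pair
    have "(\<lambda>p. snd (some_run A T p) []) ` {p \<in> accepted_pairs A T. adjacent T w (snd p)}
        = {p \<in> accepted_pairs A T. adjacent T w (snd p)}"
      by (force simp: some_run_root(2) image_iff)
    then have "coind_label A T ` coind_succ A T P v = {p \<in> P \<union> accepted_pairs A T. adjacent T w (snd p)}"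
      using pair(1) by (auto simp: coind_succ_def coind_label_def image_Un image_image)
    then have "step_holds A T (coind_label A T ` coind_succ A T P v) q w"
      using local[OF pair(2)] by (simp only: step_holds_adjacent)
    moreover have "coind_succ A T P v \<subseteq> coind_vertices A T P"
      using pair by (auto simp: coind_succ_def coind_vertices_def inj_image_mem_iff some_run_root(1))
    ultimately show ?thesis using local[OF pair(2)] pair(1) by (simp add: coind_label_def)
  next
    case run
    let ?R = "fst (some_run A T p)" and ?rl = "snd (some_run A T p)"
    have "graph_run A T ?R (rchildren ?R) ?rl"
      using accepting_run_some_run[OF run(2)] by (simp add: accepting_run_iff_graph_run)
    then have "snd (?rl y) \<in> tdom T \<and> step_holds A T (?rl ` rchildren ?R y) (fst (?rl y)) (snd (?rl y))"
      using run(3) unfolding graph_run_def by blast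
    moreover have "coind_label A T ` coind_succ A T P v = ?rl ` rchildren ?R y"
      using run(1) by (simp add: coind_succ_def coind_label_def image_image)
    ultimately show ?thesis
      using run by (auto simp: coind_succ_def coind_vertices_def coind_label_def rchildren_def inj_image_mem_iff)
  qed
qed

lemma fair_from_coind_run:
  assumes "p \<in> accepted_pairs A T"
  shows "fair_from A (coind_succ A T P) (coind_label A T) (Inr (p, []))"
  unfolding fair_from_def
proof (intro allI impI)
  fix c m assume c0: "c 0 = Inr (p, [])" and c: "\<forall>n. c (Suc n) \<in> coind_succ A T P (c n)"
  let ?R = "fst (some_run A T p)"
  have "\<exists>y. c n = Inr (p, y)" for n
  proof (induction n)
    case (Suc n)
    then obtain y where "c n = Inr (p, y)" by blast
    then show ?case using c[rule_format, of n] by (auto simp: coind_succ_def)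
  qed (simp add: c0)
  then obtain y where y: "\<And>n. c n = Inr (p, y n)" by metis
  have "y (Suc n) \<in> rchildren ?R (y n)" for n
    using c[rule_format, of n] y[of n] y[of "Suc n"] by (auto simp: coind_succ_def)
  moreover have "y 0 = []" using c0 y[of 0] by simp
  moreover have "fair_from A (rchildren ?R) (snd (some_run A T p)) []"
    using accepting_run_some_run[OF assms] by (simp add: accepting_run_iff_graph_run)
  ultimately have "\<exists>n \<ge> m. fst (snd (some_run A T p) (y n)) \<in> acc A"
    using fair_fromD[where c = y] by blast
  then show "\<exists>n \<ge> m. fst (coind_label A T (c n)) \<in> acc A"
    by (simp add: y coind_label_def)
qed

lemma fair_from_coind:
  assumes fair: "\<And>c. \<forall>n. c n \<in> P \<and> adjacent T (snd (c n)) (snd (c (Suc n)))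
      \<Longrightarrow> \<forall>m. \<exists>n \<ge> m. fst (c n) \<in> acc A"
    and "p \<in> P"
  shows "fair_from A (coind_succ A T P) (coind_label A T) (Inl p)"
  unfolding fair_from_def
proof (intro allI impI)
  fix c m assume c0: "c 0 = Inl p" and c: "\<forall>n. c (Suc n) \<in> coind_succ A T P (c n)"
  show "\<exists>n \<ge> m. fst (coind_label A T (c n)) \<in> acc A"
  proof (cases "\<forall>n. isl (c n)")
    case True
    define d where "d n = projl (c n)" for n
    have cd: "c n = Inl (d n)" for n using True by (simp add: d_def)
    have step: "d (Suc n) \<in> P \<and> adjacent T (snd (d n)) (snd (d (Suc n)))" for n
      using c[rule_format, of n] cd[of n] cd[of "Suc n"] by (cases "d n") (auto simp: coind_succ_def)
    have "d n \<in> P" for n using step \<open>p \<in> P\<close> c0 cd[of 0] by (cases n) auto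
    then have "\<exists>n \<ge> m. fst (d n) \<in> acc A" using fair[of d] step by blast
    then show ?thesis by (simp add: cd coind_label_def)
  next
    case False
    then obtain n0 where n0: "\<not> isl (c n0)" "\<forall>k < n0. isl (c k)"
      using exists_least_iff[of "\<lambda>n. \<not> isl (c n)"] by auto
    then obtain k where k: "n0 = Suc k" using c0 by (cases n0) auto
    then obtain q w where "c k = Inl (q, w)" using n0(2) by (metis isl_def lessI surj_pair)
    then obtain p' where p': "p' \<in> accepted_pairs A T" "c n0 = Inr (p', [])"
      using c[rule_format, of k] n0(1) k by (auto simp: coind_succ_def)
    have "c (Suc (n0 + j)) \<in> coind_succ A T P (c (n0 + j))" for j using c by blast
    then have "\<exists>j \<ge> m. fst (coind_label A T (c (n0 + j))) \<in> acc A"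
      using fair_fromD[where c = "\<lambda>j. c (n0 + j)", OF fair_from_coind_run[OF p'(1), where P = P]] p'(2)
      by simp
    then show ?thesis by (metis trans_le_add2 add.commute)
  qed
qed

theorem accepts_at_coinduct:
  fixes A :: "('ap, 'q::countable) hta"
  assumes local: "\<And>q w. (q, w) \<in> P \<Longrightarrow> w \<in> tdom T \<and> step_holds A T (P \<union> accepted_pairs A T) q w"
    and fair: "\<And>c. \<forall>n. c n \<in> P \<and> adjacent T (snd (c n)) (snd (c (Suc n)))
      \<Longrightarrow> \<forall>m. \<exists>n \<ge> m. fst (c n) \<in> acc A"
    and "(q, v) \<in> P"
  shows "accepts_at A T q v"
proof -
  have "graph_run A T (coind_vertices A T P) (coind_succ A T P) (coind_label A T)"
    using local by (rule graph_run_coind)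
  moreover have "Inl (q, v) \<in> coind_vertices A T P"
    using \<open>(q, v) \<in> P\<close> by (simp add: coind_vertices_def)
  moreover have "fair_from A (coind_succ A T P) (coind_label A T) (Inl (q, v))"
    using fair \<open>(q, v) \<in> P\<close> by (rule fair_from_coind)
  ultimately have "coind_label A T (Inl (q, v)) \<in> accepted_pairs A T"
    by (rule graph_run_accepted)
  then show ?thesis by (simp add: coind_label_def accepted_pairs_def)
qed

lemma step_holds_imp_accepts_at:
  fixes A :: "('ap, 'q::countable) hta"
  assumes wf: "wf_tree T" and v: "v \<in> tdom T" and step: "step_holds A T (accepted_pairs A T) q v"
  shows "accepts_at A T q v"
proof (rule accepts_at_coinduct[where P = "{(q, v)}"])
  show "w \<in> tdom T \<and> step_holds A T ({(q, v)} \<union> accepted_pairs A T) q' w" if "(q', w) \<in> {(q, v)}" for q' w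
    using that v step_holds_mono[OF wf v Un_upper2 step, of "{(q, v)}"] by simp
  show "\<forall>m. \<exists>n \<ge> m. fst (c n) \<in> acc A"
    if "\<forall>n. c n \<in> {(q, v)} \<and> adjacent T (snd (c n)) (snd (c (Suc n)))" for c
  proof -
    have "\<forall>n. c n = (q, v)" using that by simp
    then have "adjacent T v v" using spec[OF that, of 0] by simp
    then show ?thesis using not_adjacent_self by blast
  qed
qed simp

lemma accepts_at_iff_step_holds:
  fixes A :: "('ap, 'q::countable) hta"
  assumes "wf_tree T" "v \<in> tdom T"
  shows "accepts_at A T q v \<longleftrightarrow> step_holds A T (accepted_pairs A T) q v"
  using accepts_at_imp_step_holds[OF assms(1)] step_holds_imp_accepts_at[OF assms] ..

theorem refuted_not_accepts_at:
  assumes wf: "wf_tree T"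
    and rejecting: "\<And>q w. (q, w) \<in> Y \<Longrightarrow> q \<notin> acc A"
    and refuted: "\<And>q w. (q, w) \<in> Y \<Longrightarrow> \<not> step_holds A T (accepted_pairs A T - Y) q w"
    and "(q, v) \<in> Y"
  shows "\<not> accepts_at A T q v"
proof
  assume "accepts_at A T q v"
  then obtain R rl where run: "accepting_run (A\<lparr>init := q\<rparr>) T v R rl"
    unfolding accepts_at_def by blast
  then have root: "[] \<in> R" "rl [] = (q, v)" and gr: "graph_run A T R (rchildren R) rl"
    and fair: "fair_from A (rchildren R) rl []"
    by (simp_all add: accepting_run_iff_graph_run)
  define B where "B = {x \<in> R. rl x \<in> Y}"
  \<comment> \<open>A run node labelled in \<open>Y\<close> must have a child labelled in \<open>Y\<close>, since \<open>Y\<close> refutes itself;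
    so the run has an infinite path through rejecting states.\<close>
  have descend: "\<exists>y \<in> rchildren R x. y \<in> B" if x: "x \<in> B" for x
  proof (rule ccontr)
    assume none: "\<not> (\<exists>y \<in> rchildren R x. y \<in> B)"
    have sub: "rl ` rchildren R x \<subseteq> accepted_pairs A T - Y"
    proof
      fix p assume "p \<in> rl ` rchildren R x"
      then obtain y where y: "y \<in> rchildren R x" "p = rl y" by blast
      then have "y \<in> R" by (simp add: rchildren_def)
      have "rl y \<in> accepted_pairs A T" using run_labels_accepted[OF run \<open>y \<in> R\<close>] .
      moreover have "rl y \<notin> Y" using none y(1) \<open>y \<in> R\<close> by (auto simp: B_def)
      ultimately show "p \<in> accepted_pairs A T - Y" using y(2) by simp
    qed
    have xR: "x \<in> R" using x by (simp add: B_def)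
    have "step_holds A T (accepted_pairs A T - Y) (fst (rl x)) (snd (rl x))"
      using step_holds_mono[OF wf graph_runD(2)[OF gr xR] sub graph_runD(3)[OF gr xR]] .
    then show False using refuted[of "fst (rl x)" "snd (rl x)"] x by (simp add: B_def)
  qed
  have "\<exists>c. \<forall>n. (c n \<in> B \<and> (n = 0 \<longrightarrow> c n = [])) \<and> c (Suc n) \<in> rchildren R (c n)"
  proof (rule dependent_nat_choice)
    show "\<exists>x. x \<in> B \<and> (0 = 0 \<longrightarrow> x = [])"
      using root \<open>(q, v) \<in> Y\<close> by (simp add: B_def)
    show "\<exists>y. (y \<in> B \<and> (Suc n = 0 \<longrightarrow> y = [])) \<and> y \<in> rchildren R x"
      if "x \<in> B \<and> (n = 0 \<longrightarrow> x = [])" for x n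
      using descend that by auto
  qed
  then obtain c where c: "\<And>n. c n \<in> B" "c 0 = []" "\<And>n. c (Suc n) \<in> rchildren R (c n)"
    by blast
  obtain n where "fst (rl (c n)) \<in> acc A"
    using fair_fromD[where c = c and m = 0, OF fair c(2,3)] by blast
  moreover have "rl (c n) \<in> Y" using c(1) by (simp add: B_def)
  ultimately show False using rejecting[of "fst (rl (c n))" "snd (rl (c n))"] by simp
qed

definition Truth :: "'ap pctl" where
  "Truth = Or (Prop undefined) (Neg (Prop undefined))"

definition Falsity :: "'ap pctl" where
  "Falsity = Neg Truth"

definition And :: "'ap pctl \<Rightarrow> 'ap pctl \<Rightarrow> 'ap pctl" where
  "And \<phi> \<psi> = Neg (Or (Neg \<phi>) (Neg \<psi>))"

definition Disj :: "'ap pctl set \<Rightarrow> 'ap pctl" where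
  "Disj \<Phi> = foldr Or (SOME xs. set xs = \<Phi>) Falsity"

definition Conj :: "'ap pctl set \<Rightarrow> 'ap pctl" where
  "Conj \<Phi> = Neg (Disj (Neg ` \<Phi>))"

lemma sat_Truth [simp]: "sat T u Truth"
  by (simp add: Truth_def)

lemma sat_Falsity [simp]: "\<not> sat T u Falsity"
  by (simp add: Falsity_def)

lemma sat_And [simp]: "sat T u (And \<phi> \<psi>) \<longleftrightarrow> sat T u \<phi> \<and> sat T u \<psi>"
  by (simp add: And_def)

lemma sat_Disj [simp]:
  assumes "finite \<Phi>"
  shows "sat T u (Disj \<Phi>) \<longleftrightarrow> (\<exists>\<phi> \<in> \<Phi>. sat T u \<phi>)"
proof -
  have "sat T u (foldr Or xs Falsity) \<longleftrightarrow> (\<exists>\<phi> \<in> set xs. sat T u \<phi>)" for xs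
    by (induction xs) auto
  moreover have "set (SOME xs. set xs = \<Phi>) = \<Phi>"
    using finite_list[OF assms] by (rule someI_ex)
  ultimately show ?thesis by (simp add: Disj_def)
qed

lemma sat_Conj [simp]: "finite \<Phi> \<Longrightarrow> sat T u (Conj \<Phi>) \<longleftrightarrow> (\<forall>\<phi> \<in> \<Phi>. sat T u \<phi>)"
  by (simp add: Conj_def)

definition literal :: "'ap set \<Rightarrow> 'ap \<Rightarrow> 'ap pctl" where
  "literal \<sigma> p = (if p \<in> \<sigma> then Prop p else Neg (Prop p))"

lemma sat_literal [simp]: "sat T u (literal \<sigma> p) \<longleftrightarrow> (p \<in> tlab T u \<longleftrightarrow> p \<in> \<sigma>)"
  by (simp add: literal_def)

definition label_formula :: "'ap::finite set \<Rightarrow> 'ap pctl" where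
  "label_formula \<sigma> = Conj (literal \<sigma> ` UNIV)"

lemma sat_label_formula [simp]: "sat T u (label_formula \<sigma>) \<longleftrightarrow> tlab T u = \<sigma>"
  by (simp add: label_formula_def set_eq_iff)

definition root_formula :: "bool \<Rightarrow> 'ap pctl" where
  "root_formula \<rho> = (if \<rho> then Neg (EY Truth) else EY Truth)"

lemma sat_root_formula [simp]: "sat T u (root_formula \<rho>) \<longleftrightarrow> (u = []) = \<rho>"
  by (auto simp: root_formula_def)

definition case_formula :: "('ap::finite set \<Rightarrow> bool \<Rightarrow> 'ap pctl) \<Rightarrow> 'ap pctl" where
  "case_formula H = Disj ((\<lambda>(\<sigma>, \<rho>). And (label_formula \<sigma>) (And (root_formula \<rho>) (H \<sigma> \<rho>))) ` UNIV)"

lemma sat_case_formula: "sat T u (case_formula H) \<longleftrightarrow> sat T u (H (tlab T u) (u = []))"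
  by (simp add: case_formula_def split_paired_Ex)

fun pbf_formula :: "('a \<Rightarrow> 'ap pctl) \<Rightarrow> 'a pbf \<Rightarrow> 'ap pctl" where
  "pbf_formula F PTrue = Truth"
| "pbf_formula F PFalse = Falsity"
| "pbf_formula F (PAtom a) = F a"
| "pbf_formula F (PAnd f g) = And (pbf_formula F f) (pbf_formula F g)"
| "pbf_formula F (POr f g) = Or (pbf_formula F f) (pbf_formula F g)"

lemma sat_pbf_formula: "sat T u (pbf_formula F f) \<longleftrightarrow> pbf_sat (\<lambda>a. sat T u (F a)) f"
  by (induction f) auto

fun atom_formula :: "('q \<Rightarrow> 'ap pctl) \<Rightarrow> 'q atom \<Rightarrow> 'ap pctl" where
  "atom_formula \<Phi> (Dia k q) = Dn k (\<Phi> q)"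
| "atom_formula \<Phi> (Box k q) = Neg (Dn k (Neg (\<Phi> q)))"
| "atom_formula \<Phi> (Up q) = EY (\<Phi> q)"

lemma sat_atom_formula:
  assumes wf: "wf_tree T" and w: "w \<in> tdom T"
  shows "sat T w (atom_formula \<Phi> a) \<longleftrightarrow> atom_holds T {(q, v). sat T v (\<Phi> q)} w a"
proof (cases a)
  case (Dia k q)
  let ?C = "{c \<in> tchildren T w. sat T c (\<Phi> q)}"
  have "finite ?C" using finite_tchildren[OF wf w] by simp
  then have "k \<le> card ?C \<longleftrightarrow> (\<exists>V \<subseteq> ?C. card V = k)"
    by (auto intro: card_mono elim: obtain_subset_with_card_n)
  then show ?thesis using Dia by auto
qed (auto simp: not_le)

section \<open>Fixpoint laws of the temporal operators\<close>

lemma sat_EU_base: "sat T u \<psi> \<Longrightarrow> sat T u (EU \<phi> \<psi>)"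
  unfolding sat.simps by (intro exI[of _ "\<lambda>_. u"] exI[of _ 0]) simp

lemma sat_EU_step:
  assumes "sat T u \<phi>" "c \<in> tchildren T u" "sat T c (EU \<phi> \<psi>)"
  shows "sat T u (EU \<phi> \<psi>)"
proof -
  obtain f j where f: "f 0 = c" "\<forall>k<j. f (Suc k) \<in> tchildren T (f k)"
    "sat T (f j) \<psi>" "\<forall>k<j. sat T (f k) \<phi>"
    using assms(3) by auto
  define g where "g k = (if k = 0 then u else f (k - 1))" for k
  have "g 0 = u" "sat T (g (Suc j)) \<psi>" by (simp_all add: g_def f(3))
  moreover have "\<forall>k<Suc j. g (Suc k) \<in> tchildren T (g k)" "\<forall>k<Suc j. sat T (g k) \<phi>"
    using f assms(1,2) by (auto simp: g_def less_Suc_eq_0_disj)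
  ultimately show ?thesis unfolding sat.simps by blast
qed

lemma sat_EU_cases:
  assumes "sat T u (EU \<phi> \<psi>)"
  shows "sat T u \<psi> \<or> (sat T u \<phi> \<and> (\<exists>c \<in> tchildren T u. sat T c (EU \<phi> \<psi>)))"
proof -
  obtain f j where f: "f 0 = u" "\<forall>k<j. f (Suc k) \<in> tchildren T (f k)"
    "sat T (f j) \<psi>" "\<forall>k<j. sat T (f k) \<phi>"
    using assms by auto
  show ?thesis
  proof (cases j)
    case (Suc i)
    have "\<forall>k<i. f (Suc (Suc k)) \<in> tchildren T (f (Suc k))" "\<forall>k<i. sat T (f (Suc k)) \<phi>"
      using f(2,4) Suc by simp_all
    then have "sat T (f 1) (EU \<phi> \<psi>)"
      unfolding sat.simps using f(3) Suc by (intro exI[of _ "\<lambda>k. f (Suc k)"] exI[of _ i]) simp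
    moreover have "f 1 \<in> tchildren T u" "sat T u \<phi>" using f(1,2,4) Suc by auto
    ultimately show ?thesis by blast
  qed (use f in simp)
qed

lemma sat_EU_iff:
  "sat T u (EU \<phi> \<psi>) \<longleftrightarrow> sat T u \<psi> \<or> (sat T u \<phi> \<and> (\<exists>c \<in> tchildren T u. sat T c (EU \<phi> \<psi>)))"
  using sat_EU_cases sat_EU_base sat_EU_step by metis

lemma EU_induct [consumes 1, case_names base step]:
  assumes "sat T u (EU \<phi> \<psi>)"
    and base: "\<And>w. sat T w \<psi> \<Longrightarrow> X w"
    and step: "\<And>w c. sat T w \<phi> \<Longrightarrow> c \<in> tchildren T w \<Longrightarrow> X c \<Longrightarrow> X w"
  shows "X u"
proof -
  obtain f j where f: "f 0 = u" "\<forall>k<j. f (Suc k) \<in> tchildren T (f k)"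
    "sat T (f j) \<psi>" "\<forall>k<j. sat T (f k) \<phi>"
    using assms(1) by auto
  have "X (f (j - i))" if "i \<le> j" for i
    using that
  proof (induction i)
    case 0
    then show ?case using base f(3) by simp
  next
    case (Suc i)
    let ?k = "j - Suc i"
    have "?k < j" "Suc ?k = j - i" using Suc.prems by simp_all
    then have "X (f (Suc ?k))" using Suc by simp
    then show ?case using step f(2,4) \<open>?k < j\<close> by blast
  qed
  from this[of j] show ?thesis by (simp add: f(1))
qed

lemma sat_ES_iff:
  "sat T u (ES \<phi> \<psi>) \<longleftrightarrow> sat T u \<psi> \<or> (sat T u \<phi> \<and> u \<noteq> [] \<and> sat T (butlast u) (ES \<phi> \<psi>))"
proof
  assume "sat T u (ES \<phi> \<psi>)"
  then obtain j where j: "j \<le> length u" "sat T (take (length u - j) u) \<psi>"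
    "\<forall>k<j. sat T (take (length u - k) u) \<phi>" by auto
  show "sat T u \<psi> \<or> (sat T u \<phi> \<and> u \<noteq> [] \<and> sat T (butlast u) (ES \<phi> \<psi>))"
  proof (cases j)
    case (Suc i)
    then have u: "u \<noteq> []" using j(1) by auto
    have "i \<le> length (butlast u)" using j(1) Suc by simp
    moreover have "sat T (take (length (butlast u) - i) (butlast u)) \<psi>"
      using j(2) Suc u by (simp add: take_butlast)
    moreover have "\<forall>k<i. sat T (take (length (butlast u) - k) (butlast u)) \<phi>"
      using j(3) Suc u by (simp add: take_butlast)
    ultimately have "sat T (butlast u) (ES \<phi> \<psi>)" by auto
    moreover have "sat T u \<phi>" using j(3) Suc by auto
    ultimately show ?thesis using u by blast
  qed (use j in simp)
next
  assume "sat T u \<psi> \<or> (sat T u \<phi> \<and> u \<noteq> [] \<and> sat T (butlast u) (ES \<phi> \<psi>))"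
  then show "sat T u (ES \<phi> \<psi>)"
  proof
    assume "sat T u \<psi>"
    then show ?thesis by (auto intro: exI[of _ 0])
  next
    assume r: "sat T u \<phi> \<and> u \<noteq> [] \<and> sat T (butlast u) (ES \<phi> \<psi>)"
    then have u: "u \<noteq> []" by simp
    obtain j where j: "j \<le> length (butlast u)" "sat T (take (length u - Suc j) u) \<psi>"
      "\<forall>k<j. sat T (take (length u - Suc k) u) \<phi>"
      using r u by (auto simp: take_butlast)
    have "Suc j \<le> length u" using j(1) u by (cases u rule: rev_cases) auto
    moreover have "\<forall>k<Suc j. sat T (take (length u - k) u) \<phi>"
      using j(3) r by (auto simp: less_Suc_eq_0_disj)
    ultimately show ?thesis using j(2) by auto
  qed
qed

section \<open>Characterising formulas for linear automata\<close>

definition characterises :: "('ap, 'q) hta \<Rightarrow> 'q \<Rightarrow> 'ap pctl \<Rightarrow> bool" where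
  "characterises A q \<phi> \<longleftrightarrow> (\<forall>T u. wf_tree T \<longrightarrow> u \<in> tdom T \<longrightarrow> (accepts_at A T q u \<longleftrightarrow> sat T u \<phi>))"

definition step_formula :: "('ap::finite, 'q) hta \<Rightarrow> ('q \<Rightarrow> 'ap pctl) \<Rightarrow> 'q \<Rightarrow> bool \<Rightarrow> 'ap pctl" where
  "step_formula A \<Phi> q b = case_formula (\<lambda>\<sigma> \<rho>. pbf_formula
     (\<lambda>a. if atom_state a = q then (if b then Truth else Falsity) else atom_formula \<Phi> a) (delta A q \<sigma> \<rho>))"

lemma sat_step_formula:
  "sat T u (step_formula A \<Phi> q b) \<longleftrightarrow> pbf_sat (\<lambda>a. if atom_state a = q then b else sat T u (atom_formula \<Phi> a))
     (delta A q (tlab T u) (u = []))"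
  unfolding step_formula_def sat_case_formula sat_pbf_formula by (rule pbf_sat_cong) simp

lemma sat_step_formula_mono:
  "sat T u (step_formula A \<Phi> q False) \<Longrightarrow> sat T u (step_formula A \<Phi> q True)"
  unfolding sat_step_formula by (erule pbf_sat_mono[rotated]) simp

definition delta_states :: "('ap, 'q) hta \<Rightarrow> 'q \<Rightarrow> 'q set" where
  "delta_states A q = {atom_state a | a \<sigma> \<rho>. a \<in> pbf_atoms (delta A q \<sigma> \<rho>)}"

definition self_atoms :: "('ap, 'q) hta \<Rightarrow> 'q \<Rightarrow> 'q atom set" where
  "self_atoms A q = {a. \<exists>\<sigma> \<rho>. a \<in> pbf_atoms (delta A q \<sigma> \<rho>) \<and> atom_state a = q}"

lemma step_holds_iff_step_formula:
  assumes lower: "\<forall>q' \<in> delta_states A q - {q}. characterises A q' (\<Phi> q')"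
    and self: "self_atoms A q \<subseteq> {self_atom}"
    and agree: "\<forall>q' v. q' \<noteq> q \<longrightarrow> ((q', v) \<in> S \<longleftrightarrow> accepts_at A T q' v)"
    and wf: "wf_tree T" and u: "u \<in> tdom T"
  shows "step_holds A T S q u \<longleftrightarrow> sat T u (step_formula A \<Phi> q False)
    \<or> (atom_holds T S u self_atom \<and> sat T u (step_formula A \<Phi> q True))"
proof -
  let ?b = "atom_holds T S u self_atom"
  have "step_holds A T S q u \<longleftrightarrow> sat T u (step_formula A \<Phi> q ?b)"
    unfolding step_holds_def sat_step_formula
  proof (rule pbf_sat_cong)
    fix a assume a: "a \<in> pbf_atoms (delta A q (tlab T u) (u = []))"
    show "atom_holds T S u a = (if atom_state a = q then ?b else sat T u (atom_formula \<Phi> a))"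
    proof (cases "atom_state a = q")
      case False
      then have "characterises A (atom_state a) (\<Phi> (atom_state a))"
        using lower a by (auto simp: delta_states_def)
      then have "sat T u (atom_formula \<Phi> a) = atom_holds T {(q, v). sat T v (\<Phi> q)} u a"
        by (intro sat_atom_formula[OF wf u])
      also have "\<dots> = atom_holds T S u a"
        using \<open>characterises A (atom_state a) (\<Phi> (atom_state a))\<close> agree False
        by (intro atom_holds_cong[OF wf u]) (auto simp: characterises_def wf)
      finally show ?thesis using False by simp
    next
      case True
      then have "a = self_atom" using self a by (auto simp: self_atoms_def)
      then show ?thesis using True by simp
    qed
  qed
  then show ?thesis using sat_step_formula_mono[of T u A \<Phi> q] by (cases ?b) auto
qed

locale lower_characterised =
  fixes A :: "('ap::finite, 'q::countable) hta" and q :: 'q and \<Phi> :: "'q \<Rightarrow> 'ap pctl"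
  assumes lower: "\<forall>q' \<in> delta_states A q - {q}. characterises A q' (\<Phi> q')"
begin

abbreviation G\<^sub>0 :: "'ap pctl" where "G\<^sub>0 \<equiv> step_formula A \<Phi> q False"
abbreviation G\<^sub>1 :: "'ap pctl" where "G\<^sub>1 \<equiv> step_formula A \<Phi> q True"

lemma accepts_at_iff:
  assumes "self_atoms A q \<subseteq> {self_atom}" and wf: "wf_tree T" and u: "u \<in> tdom T"
  shows "accepts_at A T q u \<longleftrightarrow> sat T u G\<^sub>0 \<or> (atom_holds T (accepted_pairs A T) u self_atom \<and> sat T u G\<^sub>1)"
  unfolding accepts_at_iff_step_holds[OF wf u]
  using lower assms by (intro step_holds_iff_step_formula) simp_all

lemma characterises_transient:
  assumes "type_ok A q Transient"
  shows "characterises A q G\<^sub>0"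
  unfolding characterises_def
proof (intro allI impI)
  fix T :: "'ap stree" and u assume "wf_tree T" "u \<in> tdom T"
  \<comment> \<open>There are no self-atoms, so any atom may play the self-atom; \<open>Box 0 q\<close> never holds.\<close>
  moreover have "self_atoms A q \<subseteq> {Box 0 q}"
    using assms by (auto simp: self_atoms_def)
  ultimately show "accepts_at A T q u \<longleftrightarrow> sat T u G\<^sub>0" using accepts_at_iff by simp
qed

lemma self_atoms_existential: "type_ok A q Existential \<Longrightarrow> self_atoms A q \<subseteq> {Dia 1 q}"
  by (auto simp: self_atoms_def)

lemma accepts_at_iff_existential:
  assumes "type_ok A q Existential" "wf_tree T" "w \<in> tdom T"
  shows "accepts_at A T q w \<longleftrightarrow> sat T w G\<^sub>0 \<or> ((\<exists>c \<in> tchildren T w. accepts_at A T q c) \<and> sat T w G\<^sub>1)"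
  using accepts_at_iff[OF self_atoms_existential assms(2,3)] assms(1)
  unfolding atom_holds_Dia_1 mem_accepted_pairs .

lemma existential_sat_imp_accepts_at:
  assumes "type_ok A q Existential" and wf: "wf_tree T" and "u \<in> tdom T" "sat T u (EU G\<^sub>1 G\<^sub>0)"
  shows "accepts_at A T q u"
proof -
  from \<open>sat T u (EU G\<^sub>1 G\<^sub>0)\<close> have "u \<in> tdom T \<longrightarrow> accepts_at A T q u"
  proof (induction rule: EU_induct)
    case (base w)
    then show ?case using accepts_at_iff_existential[OF assms(1) wf] by blast
  next
    case (step w c)
    then show ?case using accepts_at_iff_existential[OF assms(1) wf] tchildren_in_tdom by blast
  qed
  then show ?thesis using \<open>u \<in> tdom T\<close> by blast
qed

lemma existential_accepts_at_imp_sat: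
  assumes "type_ok A q Existential" and rejecting: "q \<notin> acc A"
    and wf: "wf_tree T" and "accepts_at A T q u"
  shows "sat T u (EU G\<^sub>1 G\<^sub>0)"
proof (rule ccontr)
  let ?Y = "{(q, w) | w. w \<in> tdom T \<and> \<not> sat T w (EU G\<^sub>1 G\<^sub>0)}"
  have refuted: "\<not> step_holds A T (accepted_pairs A T - ?Y) q' w" if "(q', w) \<in> ?Y" for q' w
  proof
    have q': "q' = q" and w: "w \<in> tdom T" "\<not> sat T w (EU G\<^sub>1 G\<^sub>0)" using that by auto
    assume "step_holds A T (accepted_pairs A T - ?Y) q' w"
    then have "sat T w G\<^sub>0 \<or> (atom_holds T (accepted_pairs A T - ?Y) w (Dia 1 q) \<and> sat T w G\<^sub>1)"
      using step_holds_iff_step_formula[OF lower self_atoms_existential[OF assms(1)] _ wf w(1)] q' by auto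
    then show False
    proof
      assume "sat T w G\<^sub>0"
      then show False using w(2) sat_EU_base by blast
    next
      assume "atom_holds T (accepted_pairs A T - ?Y) w (Dia 1 q) \<and> sat T w G\<^sub>1"
      then obtain c where "c \<in> tchildren T w" "(q, c) \<notin> ?Y" "sat T w G\<^sub>1"
        unfolding atom_holds_Dia_1 by blast
      moreover from this have "sat T c (EU G\<^sub>1 G\<^sub>0)" using tchildren_in_tdom by blast
      ultimately show False using w(2) sat_EU_step by blast
    qed
  qed
  assume "\<not> sat T u (EU G\<^sub>1 G\<^sub>0)"
  then have "(q, u) \<in> ?Y" using accepts_at_in_tdom[OF \<open>accepts_at A T q u\<close>] by blast
  then have "\<not> accepts_at A T q u"
    using refuted_not_accepts_at[OF wf _ refuted] rejecting by blast
  then show False using \<open>accepts_at A T q u\<close> by contradiction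
qed

lemma characterises_existential:
  assumes "type_ok A q Existential" "q \<notin> acc A"
  shows "characterises A q (EU G\<^sub>1 G\<^sub>0)"
  unfolding characterises_def
  using existential_sat_imp_accepts_at[OF assms(1)] existential_accepts_at_imp_sat[OF assms] by blast

lemma self_atoms_universal: "type_ok A q Universal \<Longrightarrow> self_atoms A q \<subseteq> {Box 1 q}"
  by (auto simp: self_atoms_def)

lemma accepts_at_iff_universal:
  assumes "type_ok A q Universal" "wf_tree T" "w \<in> tdom T"
  shows "accepts_at A T q w \<longleftrightarrow> sat T w G\<^sub>0 \<or> ((\<forall>c \<in> tchildren T w. accepts_at A T q c) \<and> sat T w G\<^sub>1)"
  using accepts_at_iff[OF self_atoms_universal assms(2,3)] assms(1)
  unfolding atom_holds_Box_1[OF assms(2,3)] mem_accepted_pairs .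

lemma universal_accepts_at_imp_sat:
  assumes "type_ok A q Universal" and wf: "wf_tree T" and "accepts_at A T q u"
  shows "\<not> sat T u (EU (Neg G\<^sub>0) (Neg G\<^sub>1))"
proof -
  have "sat T w (EU (Neg G\<^sub>0) (Neg G\<^sub>1)) \<Longrightarrow> \<not> accepts_at A T q w" for w
  proof (induction rule: EU_induct)
    case (base w)
    show ?case
    proof
      assume acc: "accepts_at A T q w"
      then have "sat T w G\<^sub>0 \<or> sat T w G\<^sub>1"
        using accepts_at_iff_universal[OF assms(1) wf accepts_at_in_tdom[OF acc]] by blast
      then have "sat T w G\<^sub>1" using sat_step_formula_mono[of T w A \<Phi> q] by blast
      then show False using base by simp
    qed
  next
    case (step w c)
    show ?case
    proof
      assume acc: "accepts_at A T q w"
      then have "sat T w G\<^sub>0 \<or> (\<forall>c \<in> tchildren T w. accepts_at A T q c)"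
        using accepts_at_iff_universal[OF assms(1) wf accepts_at_in_tdom[OF acc]] by blast
      then show False using step by auto
    qed
  qed
  then show ?thesis using \<open>accepts_at A T q u\<close> by blast
qed

lemma universal_sat_imp_accepts_at:
  assumes "type_ok A q Universal" and accepting: "q \<in> acc A"
    and wf: "wf_tree T" and u: "u \<in> tdom T" "\<not> sat T u (EU (Neg G\<^sub>0) (Neg G\<^sub>1))"
  shows "accepts_at A T q u"
proof (rule accepts_at_coinduct[where P = "{(q, w) | w. w \<in> tdom T \<and> \<not> sat T w (EU (Neg G\<^sub>0) (Neg G\<^sub>1))}"])
  let ?E = "EU (Neg G\<^sub>0) (Neg G\<^sub>1)"
  let ?P = "{(q, w) | w. w \<in> tdom T \<and> \<not> sat T w ?E}"
  fix q' w assume "(q', w) \<in> ?P"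
  then have q': "q' = q" and w: "w \<in> tdom T" "\<not> sat T w ?E" by auto
  then have "sat T w G\<^sub>1" "sat T w G\<^sub>0 \<or> (\<forall>c \<in> tchildren T w. \<not> sat T c ?E)"
    using sat_EU_iff[of T w "Neg G\<^sub>0" "Neg G\<^sub>1"] unfolding sat.simps(2) by blast+
  moreover have "(q, c) \<in> ?P" if "c \<in> tchildren T w" "\<not> sat T c ?E" for c
    using that tchildren_in_tdom by blast
  ultimately have "sat T w G\<^sub>0 \<or> (atom_holds T (?P \<union> accepted_pairs A T) w (Box 1 q) \<and> sat T w G\<^sub>1)"
    unfolding atom_holds_Box_1[OF wf w(1)] by blast
  moreover have "\<forall>q'' v. q'' \<noteq> q \<longrightarrow> ((q'', v) \<in> ?P \<union> accepted_pairs A T \<longleftrightarrow> accepts_at A T q'' v)"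
    by auto
  ultimately have "step_holds A T (?P \<union> accepted_pairs A T) q w"
    using step_holds_iff_step_formula[OF lower self_atoms_universal[OF assms(1)] _ wf w(1)] by blast
  then show "w \<in> tdom T \<and> step_holds A T (?P \<union> accepted_pairs A T) q' w"
    using q' w(1) by simp
next
  show "\<forall>m. \<exists>n \<ge> m. fst (c n) \<in> acc A"
    if "\<forall>n. c n \<in> {(q, w) | w. w \<in> tdom T \<and> \<not> sat T w (EU (Neg G\<^sub>0) (Neg G\<^sub>1))}
      \<and> adjacent T (snd (c n)) (snd (c (Suc n)))" for c
  proof (intro allI exI conjI)
    fix m
    show "fst (c m) \<in> acc A" using spec[OF that, of m] accepting by auto
  qed (rule order_refl)
qed (use u in blast)

lemma characterises_universal:
  assumes "type_ok A q Universal" "q \<in> acc A"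
  shows "characterises A q (Neg (EU (Neg G\<^sub>0) (Neg G\<^sub>1)))"
  unfolding characterises_def sat.simps(2)
  using universal_accepts_at_imp_sat[OF assms(1)] universal_sat_imp_accepts_at[OF assms] by blast

lemma characterises_upward:
  assumes "type_ok A q Upward"
  shows "characterises A q (ES G\<^sub>1 G\<^sub>0)"
  unfolding characterises_def
proof (intro allI impI)
  fix T :: "'ap stree" and u assume wf: "wf_tree T" and u: "u \<in> tdom T"
  have self: "self_atoms A q \<subseteq> {Up q}"
    using assms by (auto simp: self_atoms_def)
  \<comment> \<open>Both sides satisfy the same recursion along the ancestors of \<open>u\<close>.\<close>
  show "accepts_at A T q u \<longleftrightarrow> sat T u (ES G\<^sub>1 G\<^sub>0)"
    using u
  proof (induction "length u" arbitrary: u rule: less_induct)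
    case less
    have "accepts_at A T q u \<longleftrightarrow> sat T u G\<^sub>0 \<or> ((u \<noteq> [] \<and> accepts_at A T q (butlast u)) \<and> sat T u G\<^sub>1)"
      using accepts_at_iff[OF self wf less.prems] by simp
    moreover have "accepts_at A T q (butlast u) \<longleftrightarrow> sat T (butlast u) (ES G\<^sub>1 G\<^sub>0)" if "u \<noteq> []"
      using that less.hyps butlast_in_tdom[OF wf less.prems that] by simp
    ultimately show ?case using sat_ES_iff[of T u G\<^sub>1 G\<^sub>0] by blast
  qed
qed

end

lemma exists_characterising_formula:
  fixes A :: "('ap::finite, 'q::countable) hta"
  assumes "linear_hta A"
  shows "\<exists>\<phi>. characterises A q \<phi>"
proof -
  obtain rk :: "'q \<Rightarrow> nat" and kind where rk: "inj rk"
    and rank: "\<forall>q \<sigma> \<rho>. \<forall>a \<in> pbf_atoms (delta A q \<sigma> \<rho>). rk (atom_state a) \<le> rk q"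
    and typed: "\<forall>q. type_ok A q (kind q)"
    and existential: "\<forall>q. kind q = Existential \<longrightarrow> q \<notin> acc A"
    and universal: "\<forall>q. kind q = Universal \<longrightarrow> q \<in> acc A"
    using assms unfolding linear_hta_def by blast
  show ?thesis
  proof (induction "rk q" arbitrary: q rule: less_induct)
    case less
    define \<Phi> where "\<Phi> q' = (SOME \<phi>. characterises A q' \<phi>)" for q'
    have "characterises A q' (\<Phi> q')" if q': "q' \<in> delta_states A q - {q}" for q'
    proof -
      have "rk q' \<le> rk q" using q' rank by (auto simp: delta_states_def)
      moreover have "rk q' \<noteq> rk q" using q' rk by (auto simp: inj_eq)
      ultimately have "\<exists>\<phi>. characterises A q' \<phi>" using less by simp
      then show ?thesis unfolding \<Phi>_def by (rule someI_ex)
    qed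
    then interpret lower_characterised A q \<Phi> by unfold_locales blast
    have "type_ok A q (kind q)" using typed by blast
    then show ?case
    proof (cases "kind q")
      case Transient
      then show ?thesis using \<open>type_ok A q (kind q)\<close> characterises_transient by auto
    next
      case Existential
      then show ?thesis using \<open>type_ok A q (kind q)\<close> existential characterises_existential by auto
    next
      case Universal
      then show ?thesis using \<open>type_ok A q (kind q)\<close> universal characterises_universal by auto
    next
      case Upward
      then show ?thesis using \<open>type_ok A q (kind q)\<close> characterises_upward by auto
    qed
  qed
qed

theorem theorem5p1:
  fixes A :: "('ap :: finite, 'q :: finite) hta"
  assumes "linear_hta A"
  shows "\<exists>\<phi> :: 'ap pctl. hta_lang A = ctl_lang \<phi>"
proof -
  obtain \<phi> where \<phi>: "characterises A (init A) \<phi>"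
    using exists_characterising_formula[OF assms] by blast
  have "hta_lang A = ctl_lang \<phi>"
  proof (rule set_eqI)
    fix T :: "'ap stree"
    have "(\<exists>R rl. accepting_run A T [] R rl) \<longleftrightarrow> sat T [] \<phi>" if "wf_tree T"
      using \<phi> that by (simp add: characterises_def accepts_at_def wf_tree_def)
    then show "T \<in> hta_lang A \<longleftrightarrow> T \<in> ctl_lang \<phi>"
      by (auto simp: hta_lang_def ctl_lang_def)
  qed
  then show ?thesis ..
qed

end
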